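(* Let $u,v,s$ satisfy $1<s<u<v^{-1}$ and $q=s^{-2}$. Then the constants $$a=\frac{ v (u-s^{-1}) (s^{-1} u-1)}{(1-u v) (1- s^{-2} u v)},\qquad b=\frac{ s^2-1}{(u-s)(1-su)},$$ $$c=\frac{1}{2} \left(a \left(\frac{1}{(u-s)^2}-\frac{s^2}{(1-s u)^2}\right)-\frac{s^{-4} v^2}{(1-s^{-2} u v)^2}+\frac{v^2}{(1-u v)^2} \right),\qquad d=\frac{- \sqrt{2 c}}{b}$$ satisfy $a>0$, $b<0$, $c>0$, $d>0$. *)

theory Defs
  imports Complex_Main
begin
end

theory Submission
  imports Defs
begin

text \<open>With \<open>w = s\<inverse>\<close> we have \<open>0 < w < 1 < s < u\<close> and \<open>w u > 1\<close>, which fixes the signs of all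
  factors of \<open>a\<close> and \<open>b\<close>. The constant \<open>c\<close> is half a sum of two positive differences: the first
  because \<open>s (u - s) < s u - 1\<close>, the second because \<open>x \<mapsto> x v / (1 - x u v)\<close> is increasing,
  compared at \<open>x = w\<^sup>2\<close> and \<open>x = 1\<close>.\<close>

lemma inverse_powi_two: "(x::real) powi (-2) = (inverse x)^2"
  by (simp add: power_int_minus power_inverse)

lemma inverse_powi_four: "(x::real) powi (-4) = ((inverse x)^2)^2"
  by (simp add: power_int_minus power_inverse flip: power_mult)

lemma mult_less_one_of_less_inverse:
  fixes u v :: real
  assumes "0 < u" and "u < inverse v"
  shows "0 < v" and "u * v < 1"
proof -
  show "0 < v" using assms by (metis inverse_positive_iff_positive order.strict_trans)
  then show "u * v < 1" using assms(2) by (simp add: field_simps)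
qed

lemma frac_square_strict_mono:
  fixes u v x y :: real
  assumes "0 < v" and "0 \<le> x" and "x < y" and "y * u * v < 1"
  shows "(x * v / (1 - x * u * v))^2 < (y * v / (1 - y * u * v))^2"
proof -
  have "x * (u * v) < 1"
  proof (cases "0 \<le> u * v")
    case True
    then have "x * (u * v) \<le> y * (u * v)"
      using assms(3) by (simp add: mult_right_mono)
    then show ?thesis
      using assms(4) by (simp add: mult.assoc)
  next
    case False
    then show ?thesis
      using assms(2) mult_nonneg_nonpos[of x "u * v"] by simp
  qed
  then have "x * u * v < 1"
    by (simp add: mult.assoc)
  moreover have "x * v * (1 - y * u * v) < y * v * (1 - x * u * v)"
    using assms by (simp add: algebra_simps)
  ultimately have "x * v / (1 - x * u * v) < y * v / (1 - y * u * v)"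
    using assms(4) by (simp add: divide_simps)
  moreover have "0 \<le> x * v / (1 - x * u * v)"
    using assms(1,2) \<open>x * u * v < 1\<close> by simp
  ultimately show ?thesis
    by (simp add: power_strict_mono)
qed

lemma a_pos:
  fixes s u v :: real
  assumes "1 < s" and "s < u" and "0 < v" and "u * v < 1"
  shows "0 < v * (u - inverse s) * (inverse s * u - 1) / ((1 - u * v) * (1 - s powi (-2) * u * v))"
proof -
  have "inverse s < 1" and "1 < inverse s * u"
    using assms(1,2) by (simp_all add: field_simps)
  moreover have "(inverse s)^2 * (u * v) \<le> u * v"
    using assms \<open>inverse s < 1\<close>
    by (intro mult_left_le_one_le) (simp_all add: power_le_one)
  then have "(inverse s)^2 * (u * v) < 1"
    using assms(4) by linarith
  ultimately show ?thesis
    using assms by (simp add: inverse_powi_two mult.assoc)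
qed

lemma b_neg:
  fixes s u :: real
  assumes "1 < s" and "s < u"
  shows "(s^2 - 1) / ((u - s) * (1 - s * u)) < 0"
proof -
  have "1 < s * u"
    using assms less_1_mult[of s u] by simp
  then show ?thesis
    using assms by (simp add: divide_pos_neg mult_pos_neg one_less_power)
qed

lemma inverse_square_difference_pos:
  fixes s u :: real
  assumes "1 < s" and "s < u"
  shows "0 < 1 / (u - s)^2 - s^2 / (1 - s * u)^2"
proof -
  have "s * (u - s) < s * u - 1"
    using assms less_1_mult[of s s] by (simp add: algebra_simps)
  then have "(s * (u - s))^2 < (s * u - 1)^2"
    using assms by (intro power_strict_mono) simp_all
  then have "s^2 * (u - s)^2 < (1 - s * u)^2"
    by (simp add: power_mult_distrib power2_commute)
  moreover have "0 < (u - s)^2" and "0 < (1 - s * u)^2"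
    using assms less_1_mult[of s u] by simp_all
  ultimately have "s^2 / (1 - s * u)^2 < 1 / (u - s)^2"
    by (simp add: divide_simps)
  then show ?thesis by simp
qed

theorem lemma5p1:
  fixes u v s q a b c d :: real
  assumes "1 < s" and "s < u" and "u < inverse v"
    and "q = s powi (-2)"
    and "a = v * (u - inverse s) * (inverse s * u - 1) / ((1 - u * v) * (1 - s powi (-2) * u * v))"
    and "b = (s^2 - 1) / ((u - s) * (1 - s * u))"
    and "c = (1/2) * (a * (1 / (u - s)^2 - s^2 / (1 - s * u)^2)
                 - s powi (-4) * v^2 / (1 - s powi (-2) * u * v)^2
                 + v^2 / (1 - u * v)^2)"
    and "d = - sqrt (2 * c) / b"
  shows "a > 0 \<and> b < 0 \<and> c > 0 \<and> d > 0"
proof -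
  have "0 < v" and "u * v < 1"
    using assms(1-3) mult_less_one_of_less_inverse[of u v] by simp_all
  have a: "a > 0"
    using a_pos[OF assms(1,2) \<open>0 < v\<close> \<open>u * v < 1\<close>] assms(5) by simp
  have b: "b < 0"
    using b_neg[OF assms(1,2)] assms(6) by simp
  have "0 < a * (1 / (u - s)^2 - s^2 / (1 - s * u)^2)"
    using a inverse_square_difference_pos[OF assms(1,2)] by simp
  moreover have "((inverse s)^2 * v / (1 - (inverse s)^2 * u * v))^2 < (1 * v / (1 - 1 * u * v))^2"
    using assms(1) \<open>0 < v\<close> \<open>u * v < 1\<close>
    by (intro frac_square_strict_mono) (simp_all add: power_less_one_iff inverse_less_1_iff)
  then have "s powi (-4) * v^2 / (1 - s powi (-2) * u * v)^2 < v^2 / (1 - u * v)^2"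
    by (simp add: inverse_powi_two inverse_powi_four power_divide power_mult_distrib)
  ultimately have c: "c > 0"
    using assms(7) by simp
  have "d > 0"
    using assms(8) b c by (simp add: divide_pos_neg)
  with a b c show ?thesis by simp
qed

end
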